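(* Let $r,s\ge2$ be fixed integers, and consider the equation in $x\in(-1,\infty)$ \[ (rs-r-s)\Big(1+\frac{x}{r-1}\Big)^{s-2}=(1+x)\Big(rs-r-s+sx+\frac{x(x+1)}{r-1}\Big).\tag{$\ast$} \] Then $x=0$ is a solution of $(\ast)$. Moreover: (a) If $s\in\{2,3,4\}$ and $(r,s)\ne(2,2)$, then $x=0$ is the unique solution of $(\ast)$ on $(-1,\infty)$. (b) If $s\ge5$ and $r\ge s-1$, then $(\ast)$ has no solutions on $(-1,0)$ and at most one solution on $(0,\infty)$. *)

theory Defs
  imports Complex_Main
begin

definition eqA2 :: "nat \<Rightarrow> nat \<Rightarrow> real \<Rightarrow> bool" where
  "eqA2 r s x \<longleftrightarrow>
     (real r * real s - real r - real s) * (1 + x / (real r - 1)) ^ (s - 2)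
     = (1 + x) * (real r * real s - real r - real s + real s * x + x * (x + 1) / (real r - 1))"

end

theory Submission
  imports Defs
begin

(*
  With a = r - 1 and m = s - 2 the coefficient rs - r - s becomes a (m + 1) - 1 and the
  equation reads  (a (m + 1) - 1) (1 + x/a)^m = (1 + x) Q(x)  for a quadratic Q.
  For m \<le> 2, clearing denominators turns the difference of the two sides into x times a
  polynomial that is positive on (-1, \<infinity>).
  For m \<ge> 3 and a \<ge> m, the ratio G of the two sides satisfies G(0) = 1, and G' is a positive
  factor times a cubic R that is strictly convex on [-1, \<infinity>) and negative at -1 and 0.
  So R < 0 on [-1, 0] and G > 1 on (-1, 0). On (0, \<infinity>), two solutions x < y would give by
  Rolle a zero of R in (0, x); by convexity R > 0 beyond it, so G would increase strictly on
  [x, y], a contradiction.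
*)

definition quad :: "real \<Rightarrow> nat \<Rightarrow> real \<Rightarrow> real" where
  "quad a m x = a * (real m + 1) - 1 + (real m + 2) * x + x * (x + 1) / a"

definition reduced_eq :: "real \<Rightarrow> nat \<Rightarrow> real \<Rightarrow> bool" where
  "reduced_eq a m x \<longleftrightarrow> (a * (real m + 1) - 1) * (1 + x / a) ^ m = (1 + x) * quad a m x"

lemma eqA2_iff_reduced_eq:
  assumes "2 \<le> s"
  shows "eqA2 r s x \<longleftrightarrow> reduced_eq (real r - 1) (s - 2) x"
  using assms by (simp add: eqA2_def reduced_eq_def quad_def of_nat_diff algebra_simps)

lemma reduced_eq_0_imp_zero:
  fixes a x :: real
  assumes "2 \<le> a" "-1 < x" "reduced_eq a 0 x"
  shows "x = 0"
proof -
  have "x * (a * (a - 1) + (1 + x) * (2 * a + x + 1)) = 0"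
    using assms by (simp add: reduced_eq_def quad_def field_simps)
  moreover have "a * (a - 1) + (1 + x) * (2 * a + x + 1) > 0"
    using assms by (intro add_pos_pos) (simp_all add: zero_less_mult_iff)
  ultimately show ?thesis by simp
qed

lemma reduced_eq_1_imp_zero:
  fixes a x :: real
  assumes "1 \<le> a" "-1 < x" "reduced_eq a 1 x"
  shows "x = 0"
proof -
  have "x * ((2 * a - 1) * (a - 1) + (1 + x) * (3 * a + x + 1)) = 0"
    using assms by (simp add: reduced_eq_def quad_def field_simps)
  moreover have "(2 * a - 1) * (a - 1) + (1 + x) * (3 * a + x + 1) > 0"
    using assms by (intro add_nonneg_pos) (simp_all add: zero_less_mult_iff)
  ultimately show ?thesis by simp
qed

lemma reduced_eq_2_imp_zero:
  fixes a x :: real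
  assumes "1 \<le> a" "-1 < x" "reduced_eq a 2 x"
  shows "x = 0"
proof -
  have "a * (x * ((3 * a - 1) * (a - 1)^2 + (1 + x) * (a * (4 * a - 3) + 1) + a * (1 + x)^2)) = 0"
    using assms by (simp add: reduced_eq_def quad_def field_simps power2_eq_square)
  moreover have "(3 * a - 1) * (a - 1)^2 + (1 + x) * (a * (4 * a - 3) + 1) + a * (1 + x)^2 > 0"
    using assms by (intro add_nonneg_pos add_pos_nonneg) (simp_all add: zero_less_mult_iff)
  ultimately show ?thesis using assms by simp
qed

definition ratio :: "real \<Rightarrow> nat \<Rightarrow> real \<Rightarrow> real" where
  "ratio a m x = (a * (real m + 1) - 1) * (1 + x / a) ^ m / ((1 + x) * quad a m x)"

definition ratio_numer :: "real \<Rightarrow> nat \<Rightarrow> real \<Rightarrow> real" where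
  "ratio_numer a m x =
     (real m - a + (real m - 1) * x) * (x^2 + (a * (real m + 2) + 1) * x + a * (a * (real m + 1) - 1))
     - (a + x) * (1 + x) * (a * (real m + 2) + 2 * x + 1)"

lemma ratio_numer_eq:
  assumes "a \<noteq> 0"
  shows "a^2 * (real m * (1 + x) * quad a m x / a
           - (1 + x / a) * (quad a m x + (1 + x) * (real m + 2 + (2 * x + 1) / a)))
         = ratio_numer a m x"
  using assms by (simp add: quad_def ratio_numer_def field_simps power2_eq_square)

lemma quad_has_derivative:
  assumes "a \<noteq> 0"
  shows "(quad a m has_real_derivative real m + 2 + (2 * x + 1) / a) (at x)"
  using assms unfolding quad_def[abs_def] by (auto intro!: derivative_eq_intros simp: field_simps)

lemma ratio_has_derivative:
  assumes "a \<noteq> 0" and "1 \<le> m" and "(1 + x) * quad a m x \<noteq> 0"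
  shows "(ratio a m has_real_derivative
           (a * (real m + 1) - 1) * (1 + x / a) ^ (m - 1) * ratio_numer a m x
             / (a^2 * ((1 + x) * quad a m x)^2)) (at x)"
proof -
  define N where "N = a * (real m + 1) - 1"
  define T where "T = (1 + x / a) ^ (m - 1)"
  define Q' where "Q' = real m + 2 + (2 * x + 1) / a"
  have power_m: "(1 + x / a) ^ m = (1 + x / a) * T"
    using assms(2) by (simp add: T_def power_eq_if)
  have "((\<lambda>x. N * (1 + x / a) ^ m) has_real_derivative N * (m * T / a)) (at x)"
    using assms(1) unfolding T_def by (auto intro!: derivative_eq_intros)
  moreover have "((\<lambda>x. (1 + x) * quad a m x) has_real_derivative quad a m x + (1 + x) * Q') (at x)"
    unfolding Q'_def by (auto intro!: derivative_eq_intros quad_has_derivative assms(1))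
  ultimately have "(ratio a m has_real_derivative
      (N * (m * T / a) * ((1 + x) * quad a m x) - N * (1 + x / a) ^ m * (quad a m x + (1 + x) * Q'))
        / ((1 + x) * quad a m x * ((1 + x) * quad a m x))) (at x)"
    using DERIV_divide assms(3) unfolding ratio_def[abs_def] N_def by blast
  also have "N * (m * T / a) * ((1 + x) * quad a m x) - N * (1 + x / a) ^ m * (quad a m x + (1 + x) * Q')
      = N * T * (m * (1 + x) * quad a m x / a - (1 + x / a) * (quad a m x + (1 + x) * Q'))"
    unfolding power_m by (simp add: algebra_simps add_divide_distrib)
  also have "\<dots> = N * T * (ratio_numer a m x / a^2)"
    using ratio_numer_eq[OF assms(1), of m x] assms(1) unfolding Q'_def
    by (simp add: eq_divide_eq mult.commute)
  finally show ?thesis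
    by (simp add: N_def T_def power2_eq_square mult_ac)
qed

context
  fixes a :: real and m :: nat
  assumes m_ge_3: "3 \<le> m" and a_ge_m: "real m \<le> a"
begin

lemma quad_pos:
  assumes "-1 < x"
  shows "0 < quad a m x"
proof -
  have "-(1 + x) \<le> x * (x + 1)"
    using zero_le_square[of "x + 1"] by (simp add: algebra_simps)
  then have "-(1 + x) / a \<le> x * (x + 1) / a"
    using m_ge_3 a_ge_m by (intro divide_right_mono) auto
  moreover have "(1 + x) / a \<le> 1 + x"
    using assms m_ge_3 a_ge_m by (simp add: divide_le_eq)
  moreover have "(a - 1) * (real m + 1) \<ge> 2 * 4"
    using m_ge_3 a_ge_m by (intro mult_mono) auto
  moreover have "(real m + 1) * (-1) < (real m + 1) * x"
    using assms by (intro mult_strict_left_mono) auto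
  ultimately show ?thesis
    unfolding quad_def by argo
qed

lemma ratio_numer_strict_convex:
  assumes "-1 \<le> u" and "u < y" and "y < v"
  shows "(v - u) * ratio_numer a m y < (v - y) * ratio_numer a m u + (y - u) * ratio_numer a m v"
proof -
  \<comment> \<open>up to a positive factor, the second divided difference of the cubic\<close>
  define c where "c = (real m - 3) * (u + y + v) + a * (real m^2 - 7) + 2 * real m - 4"
  have "(v - u) * ratio_numer a m y - (v - y) * ratio_numer a m u - (y - u) * ratio_numer a m v
      = - ((v - u) * (y - u) * (v - y) * c)"
    unfolding ratio_numer_def c_def by (simp add: algebra_simps power2_eq_square power3_eq_cube)
  moreover have "0 < c"
  proof -
    have "real m * 2 \<le> real m * (real m^2 - 7)"
      using m_ge_3 power_mono[of 3 "real m" 2] by (intro mult_left_mono) auto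
    also have "\<dots> \<le> a * (real m^2 - 7)"
      using m_ge_3 a_ge_m power_mono[of 3 "real m" 2] by (intro mult_right_mono) auto
    moreover have "(real m - 3) * (-3) \<le> (real m - 3) * (u + y + v)"
      using assms m_ge_3 by (intro mult_left_mono) auto
    moreover have "3 \<le> real m"
      using m_ge_3 by simp
    ultimately show ?thesis
      unfolding c_def by argo
  qed
  moreover have "0 < (v - u) * (y - u) * (v - y)"
    using assms by simp
  ultimately have "(v - u) * ratio_numer a m y - (v - y) * ratio_numer a m u - (y - u) * ratio_numer a m v < 0"
    by simp
  then show ?thesis
    by linarith
qed

lemma ratio_numer_zero_neg: "ratio_numer a m 0 < 0"
proof -
  have "1 * 1 \<le> a * (real m + 1)"
    using m_ge_3 a_ge_m by (intro mult_mono) auto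
  then have "(real m - a) * (a * (a * (real m + 1) - 1)) \<le> 0"
    using m_ge_3 a_ge_m by (intro mult_nonpos_nonneg) auto
  moreover have "0 < a * (a * (real m + 2) + 1)"
    using m_ge_3 a_ge_m by (simp add: add_pos_pos)
  ultimately show ?thesis
    unfolding ratio_numer_def by (simp add: algebra_simps)
qed

lemma ratio_numer_minus_one_neg: "ratio_numer a m (-1) < 0"
proof -
  have "real m * 4 \<le> a * (real m + 1)"
    using m_ge_3 a_ge_m by (intro mult_mono) auto
  then have "0 < a * (a * (real m + 1) - real m - 3)"
    using m_ge_3 a_ge_m by (intro mult_pos_pos) auto
  then have "(1 - a) * (a * (a * (real m + 1) - real m - 3)) < 0"
    using m_ge_3 a_ge_m by (intro mult_neg_pos) auto
  then show ?thesis
    unfolding ratio_numer_def by (simp add: algebra_simps power2_eq_square)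
qed

lemma ratio_numer_neg:
  assumes "-1 \<le> y" and "y \<le> 0"
  shows "ratio_numer a m y < 0"
proof -
  consider "y = -1" | "y = 0" | "-1 < y" "y < 0"
    using assms by linarith
  then show ?thesis
  proof cases
    case 3
    then have "ratio_numer a m y < - y * ratio_numer a m (-1) + (y + 1) * ratio_numer a m 0"
      using ratio_numer_strict_convex[of "-1" y 0] by simp
    moreover have "- y * ratio_numer a m (-1) < 0" and "(y + 1) * ratio_numer a m 0 < 0"
      using 3 ratio_numer_minus_one_neg ratio_numer_zero_neg by (auto intro: mult_pos_neg mult_neg_neg)
    ultimately show ?thesis by linarith
  qed (simp_all add: ratio_numer_minus_one_neg ratio_numer_zero_neg)
qed

lemma ratio_numer_pos:
  assumes "0 < \<xi>" and "0 \<le> ratio_numer a m \<xi>" and "\<xi> < z"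
  shows "0 < ratio_numer a m z"
proof -
  have "z * ratio_numer a m \<xi> < (z - \<xi>) * ratio_numer a m 0 + \<xi> * ratio_numer a m z"
    using assms ratio_numer_strict_convex[of 0 \<xi> z] by simp
  moreover have "0 \<le> z * ratio_numer a m \<xi>" and "(z - \<xi>) * ratio_numer a m 0 < 0"
    using assms ratio_numer_zero_neg by (simp_all add: mult_pos_neg)
  ultimately have "0 < \<xi> * ratio_numer a m z"
    by linarith
  then show ?thesis
    using assms(1) by (simp add: zero_less_mult_iff)
qed

lemma ratio_has_derivative_pos_multiple:
  assumes "-1 < x"
  obtains K where "0 < K" and "(ratio a m has_real_derivative K * ratio_numer a m x) (at x)"
proof
  have "0 < 1 + x / a"
    using assms m_ge_3 a_ge_m by (simp add: field_simps)
  moreover have "1 < a * (real m + 1)"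
    using m_ge_3 a_ge_m by (intro less_1_mult) auto
  moreover have "0 < (1 + x) * quad a m x"
    using assms quad_pos by simp
  ultimately show "0 < (a * (real m + 1) - 1) * (1 + x / a) ^ (m - 1) / (a^2 * ((1 + x) * quad a m x)^2)"
    using m_ge_3 a_ge_m by (intro divide_pos_pos mult_pos_pos) auto
  show "(ratio a m has_real_derivative
          (a * (real m + 1) - 1) * (1 + x / a) ^ (m - 1) / (a^2 * ((1 + x) * quad a m x)^2)
            * ratio_numer a m x) (at x)"
    using ratio_has_derivative[of a m x] assms quad_pos[OF assms] m_ge_3 a_ge_m by (simp add: mult_ac)
qed

lemma ratio_zero: "ratio a m 0 = 1"
proof -
  have "1 < a * (real m + 1)"
    using m_ge_3 a_ge_m by (intro less_1_mult) auto
  then show ?thesis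
    by (simp add: ratio_def quad_def)
qed

lemma reduced_eq_iff_ratio_eq_1:
  assumes "-1 < x"
  shows "reduced_eq a m x \<longleftrightarrow> ratio a m x = 1"
  using assms quad_pos[OF assms] by (auto simp: reduced_eq_def ratio_def)

lemma ratio_gt_1_on_neg:
  assumes "-1 < x" and "x < 0"
  shows "1 < ratio a m x"
proof -
  have "ratio a m 0 < ratio a m x"
  proof (rule DERIV_neg_imp_decreasing[OF \<open>x < 0\<close>])
    fix z assume "x \<le> z" and "z \<le> 0"
    then have "-1 < z" using assms by simp
    then obtain K where "0 < K" and "(ratio a m has_real_derivative K * ratio_numer a m z) (at z)"
      by (rule ratio_has_derivative_pos_multiple)
    moreover have "ratio_numer a m z < 0"
      using \<open>-1 < z\<close> \<open>z \<le> 0\<close> by (intro ratio_numer_neg) auto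
    ultimately show "\<exists>D. (ratio a m has_real_derivative D) (at z) \<and> D < 0"
      by (auto intro: mult_pos_neg)
  qed
  then show ?thesis
    by (simp add: ratio_zero)
qed

lemma ratio_differentiable:
  assumes "-1 < x"
  shows "ratio a m differentiable (at x)"
proof -
  obtain K where "(ratio a m has_real_derivative K * ratio_numer a m x) (at x)"
    using ratio_has_derivative_pos_multiple[OF assms] by blast
  then show ?thesis
    unfolding real_differentiable_def by blast
qed

lemma ratio_numer_root_below:
  assumes "0 < x" and "ratio a m x = 1"
  obtains \<xi> where "0 < \<xi>" and "\<xi> < x" and "ratio_numer a m \<xi> = 0"
proof -
  have "\<exists>\<xi>. 0 < \<xi> \<and> \<xi> < x \<and> (ratio a m has_real_derivative 0) (at \<xi>)"
  proof (rule Rolle[OF \<open>0 < x\<close>])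
    show "ratio a m 0 = ratio a m x"
      using assms(2) by (simp add: ratio_zero)
    show "continuous_on {0..x} (ratio a m)"
      using ratio_differentiable unfolding real_differentiable_def
      by (intro DERIV_atLeastAtMost_imp_continuous_on) force
  qed (simp add: ratio_differentiable)
  then obtain \<xi> where "0 < \<xi>" and "\<xi> < x" and "(ratio a m has_real_derivative 0) (at \<xi>)"
    by blast
  moreover obtain K where "0 < K" and "(ratio a m has_real_derivative K * ratio_numer a m \<xi>) (at \<xi>)"
    using ratio_has_derivative_pos_multiple[of \<xi>] \<open>0 < \<xi>\<close> by force
  ultimately have "K * ratio_numer a m \<xi> = 0"
    using DERIV_unique by blast
  with \<open>0 < K\<close> \<open>0 < \<xi>\<close> \<open>\<xi> < x\<close> show ?thesis
    using that by simp
qed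

lemma ratio_strict_mono_beyond_root:
  assumes "0 < \<xi>" and "\<xi> < x" and "ratio_numer a m \<xi> = 0" and "x < y"
  shows "ratio a m x < ratio a m y"
proof (rule DERIV_pos_imp_increasing[OF \<open>x < y\<close>])
  fix z assume "x \<le> z" and "z \<le> y"
  then have "-1 < z" and "\<xi> < z" using assms by auto
  then obtain K where "0 < K" and "(ratio a m has_real_derivative K * ratio_numer a m z) (at z)"
    using ratio_has_derivative_pos_multiple by blast
  moreover have "0 < ratio_numer a m z"
    using assms \<open>\<xi> < z\<close> by (intro ratio_numer_pos[of \<xi>]) auto
  ultimately show "\<exists>D. (ratio a m has_real_derivative D) (at z) \<and> 0 < D"
    by auto
qed

lemma reduced_eq_no_neg_solution:
  assumes "-1 < x" and "x < 0"
  shows "\<not> reduced_eq a m x"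
  using assms reduced_eq_iff_ratio_eq_1 ratio_gt_1_on_neg by fastforce

lemma reduced_eq_pos_solution_unique:
  assumes "0 < x" and "0 < y" and "reduced_eq a m x" and "reduced_eq a m y"
  shows "x = y"
proof -
  have no_two: False if "0 < u" and "u < v" and "ratio a m u = 1" and "ratio a m v = 1" for u v
  proof -
    obtain \<xi> where "0 < \<xi>" and "\<xi> < u" and "ratio_numer a m \<xi> = 0"
      using ratio_numer_root_below[OF \<open>0 < u\<close> \<open>ratio a m u = 1\<close>] .
    then have "ratio a m u < ratio a m v"
      using \<open>u < v\<close> by (rule ratio_strict_mono_beyond_root)
    then show False
      using that by simp
  qed
  have "ratio a m x = 1" and "ratio a m y = 1"
    using assms reduced_eq_iff_ratio_eq_1 by auto
  then show ?thesis
    using no_two[of x y] no_two[of y x] assms by (cases x y rule: linorder_cases) auto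
qed

end

theorem lemmaA2:
  fixes r s :: nat
  assumes "r \<ge> 2" and "s \<ge> 2"
  shows "eqA2 r s 0 \<and>
         (s \<in> {2, 3, 4} \<and> (r, s) \<noteq> (2, 2) \<longrightarrow>
           (\<forall>x::real. x > -1 \<and> eqA2 r s x \<longrightarrow> x = 0)) \<and>
         (s \<ge> 5 \<and> r \<ge> s - 1 \<longrightarrow>
           (\<forall>x::real. -1 < x \<and> x < 0 \<longrightarrow> \<not> eqA2 r s x) \<and>
           (\<forall>x y::real. 0 < x \<and> 0 < y \<and> eqA2 r s x \<and> eqA2 r s y \<longrightarrow> x = y))"
proof -
  have reduce: "eqA2 r s x \<longleftrightarrow> reduced_eq (real r - 1) (s - 2) x" for x
    using assms(2) by (rule eqA2_iff_reduced_eq)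
  have regime: "3 \<le> s - 2" "real (s - 2) \<le> real r - 1" if "s \<ge> 5 \<and> r \<ge> s - 1"
  proof -
    from that have "s - 2 \<le> r - 1" and "3 \<le> s - 2"
      by auto
    then show "3 \<le> s - 2" "real (s - 2) \<le> real r - 1"
      using assms(1) of_nat_mono[of "s - 2" "r - 1"] by (simp_all add: of_nat_diff)
  qed
  show ?thesis
  proof (intro conjI impI allI)
    show "eqA2 r s 0"
      by (simp add: eqA2_def)
  next
    fix x :: real
    assume s: "s \<in> {2, 3, 4} \<and> (r, s) \<noteq> (2, 2)" and "x > -1 \<and> eqA2 r s x"
    then have "-1 < x" and x: "reduced_eq (real r - 1) (s - 2) x"
      using reduce by auto
    consider "s = 2" "3 \<le> r" | "s = 3" | "s = 4"
      using s assms by force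
    then show "x = 0"
      using \<open>-1 < x\<close> x assms reduced_eq_0_imp_zero[of "real r - 1" x]
        reduced_eq_1_imp_zero[of "real r - 1" x] reduced_eq_2_imp_zero[of "real r - 1" x]
      by cases simp_all
  next
    fix x :: real
    assume "s \<ge> 5 \<and> r \<ge> s - 1" and "-1 < x \<and> x < 0"
    then show "\<not> eqA2 r s x"
      using reduce reduced_eq_no_neg_solution[OF regime, of x] by blast
  next
    fix x y :: real
    assume "s \<ge> 5 \<and> r \<ge> s - 1" and "0 < x \<and> 0 < y \<and> eqA2 r s x \<and> eqA2 r s y"
    then show "x = y"
      using reduce reduced_eq_pos_solution_unique[OF regime, of x y] by blast
  qed
qed

end
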